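(* Let $\mathcal{C}>2$. For a probability vector $\boldsymbol\pi\in\mathbb{R}^k$, let $\tilde G^m(\boldsymbol\pi)=\sum_{i=1}^k\sqrt{\pi_i(\mathcal{C}-\pi_i)}$. Then $\tilde G^m$ is strongly concave with respect to the $\ell_2$-norm with modulus $\frac{2(\mathcal{C}-2)^2}{\mathcal{C}^3}$. Consequently, for any probability vectors $\boldsymbol\pi_0,\boldsymbol\pi_1\in\mathbb{R}^k$, any $\beta\in[0,1]$, and $\boldsymbol\pi=(1-\beta)\boldsymbol\pi_0+\beta\boldsymbol\pi_1$, \[ \tilde G^m(\boldsymbol\pi)-(1-\beta)\tilde G^m(\boldsymbol\pi_0)-\beta\tilde G^m(\boldsymbol\pi_1)\ \ge\ \frac{(\mathcal{C}-2)^2}{\mathcal{C}^3}\beta(1-\beta)\|\boldsymbol\pi_0-\boldsymbol\pi_1\|_2^2. \]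
   Context: A function $\Phi$ is strongly concave with respect to a norm $\|\cdot\|$ with modulus $\sigma>0$ if, for all $u,v$ in its domain and all $\theta\in[0,1]$, \[ \Phi(\theta u+(1-\theta)v)\ge\theta\Phi(u)+(1-\theta)\Phi(v)+\tfrac{\sigma}{2}\theta(1-\theta)\|u-v\|^2. \] *)

theory Defs
  imports "HOL-Analysis.Analysis"
begin

definition prob_simplex :: "(real ^ 'k) set" where
  "prob_simplex = {p. (\<forall>i. 0 \<le> p $ i) \<and> (\<Sum>i\<in>UNIV. p $ i) = 1}"

definition strongly_concave_on :: "('a::real_normed_vector) set \<Rightarrow> ('a \<Rightarrow> real) \<Rightarrow> real \<Rightarrow> bool" where
  "strongly_concave_on D \<Phi> \<sigma> \<longleftrightarrow>
     (\<forall>u\<in>D. \<forall>v\<in>D. \<forall>\<theta>::real. 0 \<le> \<theta> \<and> \<theta> \<le> 1 \<longrightarrow>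
        \<Phi> (\<theta> *\<^sub>R u + (1 - \<theta>) *\<^sub>R v) \<ge>
          \<theta> * \<Phi> u + (1 - \<theta>) * \<Phi> v + \<sigma> / 2 * \<theta> * (1 - \<theta>) * (norm (u - v))\<^sup>2)"

definition Gm :: "real \<Rightarrow> real ^ 'k \<Rightarrow> real" where
  "Gm C p = (\<Sum>i\<in>UNIV. sqrt (p $ i * (C - p $ i)))"

end

theory Submission
  imports Defs
begin

text \<open>Each coordinate map \<open>x \<mapsto> \<surd>(x(C - x))\<close> is the upper half of a circle of radius \<open>C/2\<close>.
  With \<open>A\<close> the convex combination of its values and \<open>G\<close> its value at the convex combination,
  expanding the quadratic gives \<open>G\<^sup>2 - A\<^sup>2 \<ge> \<theta>(1 - \<theta>)(a - b)\<^sup>2\<close>, while \<open>G + A \<le> C\<close>;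
  dividing yields a concavity gap of \<open>\<theta>(1 - \<theta>)(a - b)\<^sup>2/C\<close>, i.e.\ modulus \<open>2/C\<close> per coordinate.
  Summing over the coordinates gives the same modulus for \<open>Gm C\<close> in the \<open>\<ell>\<^sub>2\<close>-norm, and
  \<open>2(C - 2)\<^sup>2/C\<^sup>3 \<le> 2/C\<close>.\<close>

lemma sqrt_mul_diff_le_half:
  fixes C m :: real
  assumes "C > 0"
  shows "sqrt (m * (C - m)) \<le> C / 2"
proof -
  have "m * (C - m) = (C / 2)\<^sup>2 - (C / 2 - m)\<^sup>2"
    by (simp add: power2_eq_square algebra_simps)
  then have "sqrt (m * (C - m)) \<le> sqrt ((C / 2)\<^sup>2)"
    by (intro real_sqrt_le_mono) simp
  then show ?thesis
    using assms by simp
qed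

lemma sqrt_mul_diff_concavity_gap:
  fixes C a b \<theta> :: real
  assumes C: "C > 0"
    and a: "0 \<le> a" "a \<le> C" and b: "0 \<le> b" "b \<le> C"
    and \<theta>: "0 \<le> \<theta>" "\<theta> \<le> 1"
  defines "m \<equiv> \<theta> * a + (1 - \<theta>) * b"
  shows "\<theta> * sqrt (a * (C - a)) + (1 - \<theta>) * sqrt (b * (C - b)) + \<theta> * (1 - \<theta>) * (a - b)\<^sup>2 / C
    \<le> sqrt (m * (C - m))"
proof -
  define x y where "x = sqrt (a * (C - a))" and "y = sqrt (b * (C - b))"
  define A G t where "A = \<theta> * x + (1 - \<theta>) * y" and "G = sqrt (m * (C - m))"
    and "t = \<theta> * (1 - \<theta>) * (a - b)\<^sup>2"
  have x: "x \<ge> 0" "x\<^sup>2 = a * (C - a)" and y: "y \<ge> 0" "y\<^sup>2 = b * (C - b)"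
    using a b by (simp_all add: x_def y_def)
  have "t \<ge> 0"
    using \<theta> by (simp add: t_def)
  have jensen: "\<theta> * x\<^sup>2 + (1 - \<theta>) * y\<^sup>2 - A\<^sup>2 = \<theta> * (1 - \<theta>) * (x - y)\<^sup>2"
    by (simp add: A_def power2_eq_square algebra_simps)
  have quadratic: "m * (C - m) = \<theta> * x\<^sup>2 + (1 - \<theta>) * y\<^sup>2 + t"
    unfolding m_def t_def x(2) y(2) by (simp add: power2_eq_square algebra_simps)
  have "0 \<le> \<theta> * (1 - \<theta>) * (x - y)\<^sup>2"
    using \<theta> by simp
  then have "A\<^sup>2 + t \<le> m * (C - m)"
    using jensen quadratic by linarith
  moreover have "0 \<le> m * (C - m)"
    using calculation \<open>t \<ge> 0\<close> zero_le_power2[of A] by linarith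
  ultimately have G_sq: "A\<^sup>2 + t \<le> G\<^sup>2" and "G \<ge> 0"
    by (simp_all add: G_def)
  then have "A\<^sup>2 \<le> G\<^sup>2"
    using \<open>t \<ge> 0\<close> by linarith
  then have "A \<le> G"
    using \<open>G \<ge> 0\<close> by (rule power2_le_imp_le)
  have "G \<le> C / 2"
    using sqrt_mul_diff_le_half[OF C] by (simp add: G_def)
  have "A \<le> C / 2"
    unfolding A_def x_def y_def
    using sqrt_mul_diff_le_half[OF C] \<theta> by (intro convex_bound_le) auto
  have "t \<le> (G - A) * (G + A)"
    using G_sq by (simp add: power2_eq_square algebra_simps)
  also have "\<dots> \<le> (G - A) * C"
    using \<open>A \<le> G\<close> \<open>G \<le> C / 2\<close> \<open>A \<le> C / 2\<close> by (intro mult_left_mono) auto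
  finally have "t / C \<le> G - A"
    using C by (simp add: divide_le_eq)
  then have "A + t / C \<le> G"
    by simp
  then show ?thesis
    unfolding A_def G_def x_def y_def t_def .
qed

lemma power2_norm_vec_real: "(norm (x :: real ^ 'n))\<^sup>2 = (\<Sum>i\<in>UNIV. (x $ i)\<^sup>2)"
  unfolding norm_vec_def L2_set_def by (simp add: sum_nonneg)

lemma strongly_concave_on_subset:
  "strongly_concave_on D \<Phi> \<sigma> \<Longrightarrow> E \<subseteq> D \<Longrightarrow> strongly_concave_on E \<Phi> \<sigma>"
  unfolding strongly_concave_on_def by blast

lemma strongly_concave_on_mono_modulus:
  assumes "strongly_concave_on D \<Phi> \<sigma>" and "\<sigma>' \<le> \<sigma>"
  shows "strongly_concave_on D \<Phi> \<sigma>'"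
  unfolding strongly_concave_on_def
proof (intro ballI allI impI)
  fix u v and \<theta> :: real assume uv: "u \<in> D" "v \<in> D" and \<theta>: "0 \<le> \<theta> \<and> \<theta> \<le> 1"
  have "\<sigma>' / 2 * \<theta> * (1 - \<theta>) * (norm (u - v))\<^sup>2 \<le> \<sigma> / 2 * \<theta> * (1 - \<theta>) * (norm (u - v))\<^sup>2"
    using assms(2) \<theta> by (intro mult_right_mono) auto
  moreover have "\<theta> * \<Phi> u + (1 - \<theta>) * \<Phi> v + \<sigma> / 2 * \<theta> * (1 - \<theta>) * (norm (u - v))\<^sup>2
      \<le> \<Phi> (\<theta> *\<^sub>R u + (1 - \<theta>) *\<^sub>R v)"
    using assms(1) uv \<theta> unfolding strongly_concave_on_def by blast
  ultimately show "\<theta> * \<Phi> u + (1 - \<theta>) * \<Phi> v + \<sigma>' / 2 * \<theta> * (1 - \<theta>) * (norm (u - v))\<^sup>2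
      \<le> \<Phi> (\<theta> *\<^sub>R u + (1 - \<theta>) *\<^sub>R v)"
    by linarith
qed

lemma strongly_concave_on_gap:
  assumes "strongly_concave_on D \<Phi> \<sigma>" and "u \<in> D" "v \<in> D" and "0 \<le> \<beta>" "\<beta> \<le> 1"
  shows "\<Phi> ((1 - \<beta>) *\<^sub>R u + \<beta> *\<^sub>R v) - (1 - \<beta>) * \<Phi> u - \<beta> * \<Phi> v
    \<ge> \<sigma> / 2 * \<beta> * (1 - \<beta>) * (norm (u - v))\<^sup>2"
proof -
  have "0 \<le> 1 - \<beta> \<and> 1 - \<beta> \<le> 1"
    using assms(4,5) by simp
  with assms(1-3) have "(1 - \<beta>) * \<Phi> u + (1 - (1 - \<beta>)) * \<Phi> v
      + \<sigma> / 2 * (1 - \<beta>) * (1 - (1 - \<beta>)) * (norm (u - v))\<^sup>2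
    \<le> \<Phi> ((1 - \<beta>) *\<^sub>R u + (1 - (1 - \<beta>)) *\<^sub>R v)"
    unfolding strongly_concave_on_def by blast
  then show ?thesis
    by (simp add: algebra_simps)
qed

lemma Gm_strongly_concave_on_box:
  fixes C :: real
  assumes "C > 0"
  shows "strongly_concave_on {p :: real ^ 'k. \<forall>i. 0 \<le> p $ i \<and> p $ i \<le> C} (Gm C) (2 / C)"
  unfolding strongly_concave_on_def
proof (intro ballI allI impI)
  fix u v :: "real ^ 'k" and \<theta> :: real
  assume u: "u \<in> {p. \<forall>i. 0 \<le> p $ i \<and> p $ i \<le> C}" and v: "v \<in> {p. \<forall>i. 0 \<le> p $ i \<and> p $ i \<le> C}"
    and \<theta>: "0 \<le> \<theta> \<and> \<theta> \<le> 1"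
  have "\<theta> * Gm C u + (1 - \<theta>) * Gm C v + 2 / C / 2 * \<theta> * (1 - \<theta>) * (norm (u - v))\<^sup>2
      = (\<Sum>i\<in>UNIV. \<theta> * sqrt (u$i * (C - u$i)) + (1 - \<theta>) * sqrt (v$i * (C - v$i))
           + \<theta> * (1 - \<theta>) * (u$i - v$i)\<^sup>2 / C)"
    by (simp add: Gm_def power2_norm_vec_real sum.distrib sum_distrib_left sum_divide_distrib)
  also have "\<dots> \<le> Gm C (\<theta> *\<^sub>R u + (1 - \<theta>) *\<^sub>R v)"
    unfolding Gm_def
    using sqrt_mul_diff_concavity_gap[OF assms] u v \<theta> by (intro sum_mono) simp
  finally show "\<theta> * Gm C u + (1 - \<theta>) * Gm C v + 2 / C / 2 * \<theta> * (1 - \<theta>) * (norm (u - v))\<^sup>2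
      \<le> Gm C (\<theta> *\<^sub>R u + (1 - \<theta>) *\<^sub>R v)" .
qed

lemma prob_simplex_subset_box:
  assumes "C \<ge> 1"
  shows "prob_simplex \<subseteq> {p :: real ^ 'k. \<forall>i. 0 \<le> p $ i \<and> p $ i \<le> C}"
proof (intro subsetI CollectI allI)
  fix p :: "real ^ 'k" and i
  assume "p \<in> prob_simplex"
  then have nonneg: "\<forall>j. 0 \<le> p $ j" and sum: "(\<Sum>j\<in>UNIV. p $ j) = 1"
    unfolding prob_simplex_def by auto
  have "p $ i \<le> (\<Sum>j\<in>UNIV. p $ j)"
    using nonneg by (intro member_le_sum) auto
  then show "0 \<le> p $ i \<and> p $ i \<le> C"
    using nonneg sum assms by auto
qed

theorem lemma12:
  fixes C :: real
  assumes "C > 2"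
  shows "strongly_concave_on (prob_simplex :: (real ^ 'k) set) (Gm C) (2 * (C - 2)\<^sup>2 / C ^ 3)
    \<and> (\<forall>\<pi>0 \<in> (prob_simplex :: (real ^ 'k) set). \<forall>\<pi>1 \<in> prob_simplex. \<forall>\<beta>::real.
          0 \<le> \<beta> \<and> \<beta> \<le> 1 \<longrightarrow>
          Gm C ((1 - \<beta>) *\<^sub>R \<pi>0 + \<beta> *\<^sub>R \<pi>1) - (1 - \<beta>) * Gm C \<pi>0 - \<beta> * Gm C \<pi>1
            \<ge> (C - 2)\<^sup>2 / C ^ 3 * \<beta> * (1 - \<beta>) * (norm (\<pi>0 - \<pi>1))\<^sup>2)"
proof -
  have "(C - 2)\<^sup>2 / C ^ 3 \<le> C\<^sup>2 / C ^ 3"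
    using assms by (intro divide_right_mono power_mono) auto
  also have "\<dots> = 1 / C"
    using assms by (simp add: power2_eq_square power3_eq_cube)
  finally have "2 * (C - 2)\<^sup>2 / C ^ 3 \<le> 2 / C"
    by simp
  then have concave: "strongly_concave_on prob_simplex (Gm C) (2 * (C - 2)\<^sup>2 / C ^ 3)"
    using assms by (intro strongly_concave_on_mono_modulus[OF strongly_concave_on_subset
        [OF Gm_strongly_concave_on_box prob_simplex_subset_box]]) simp_all
  then show ?thesis
    using strongly_concave_on_gap[OF concave] by auto
qed

end
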